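(* The families $\{d_\xi^{-1/2}\Pi_{\xi\alpha\beta}\}_{\xi,\alpha,\beta}$ and $\{d_\xi^{-1/2}\mathrm{Twirl}_{\xi\alpha\beta}\}_{\xi,\alpha,\beta}$ (over all isomorphism types $\xi$ occurring in $\mathcal L(V)$ and $1\le\alpha,\beta\le m_\xi$) are both orthonormal bases of $\mathrm{Hom}_G(\mathcal L(V),\mathcal L(V))$, which has dimension $\sum_\xi m_\xi^2$. Consequently the square matrix $U$ with entries \[ U_{(\xi,\alpha,\beta),(\rho,\mu,\nu)}=\Big\langle\!\!\Big\langle \tfrac1{\sqrt{d_\xi}}\Pi_{\xi\alpha\beta},\tfrac1{\sqrt{d_\rho}}\mathrm{Twirl}_{\rho\mu\nu}\Big\rangle\!\!\Big\rangle \] is unitary.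
   Context: Let $G$ be a group and $V$ a finite-dimensional complex Hilbert space carrying a unitary representation $\rho$ of $G$; $G$ acts on $\mathcal L(V)$ by conjugation $g\cdot X=\rho(g)X\rho(g)^\dagger$, unitarily for the Hilbert–Schmidt inner product $\langle X_1,X_2\rangle=\mathrm{Tr}(X_1^\dagger X_2)$. Let $\mathcal L(V)=\bigoplus_\xi\mathcal E_\xi$ be the isotypic decomposition, $m_\xi$ the multiplicity and $d_\xi$ the dimension of the irreducible type $\xi$. Choose an orthogonal decomposition $\mathcal E_\xi=\bigoplus_{\alpha=1}^{m_\xi}\mathcal E_{\xi\alpha}$ into irreducible subrepresentations, $G$-equivariant isometric isomorphisms $\phi^\xi_{1\alpha}:\mathcal E_{\xi1}\to\mathcal E_{\xi\alpha}$ with $\phi^\xi_{11}=\mathrm{id}$, and set $\phi^\xi_{\alpha\beta}=\phi^\xi_{1\beta}(\phi^\xi_{1\alpha})^\dagger$. Fix an orthonormal basis $\{E_i^1\}_{i=1}^{d_\xi}$ of $\mathcal E_{\xi1}$ and put $E_i^\alpha=\phi^\xi_{1\alpha}(E_i^1)$ (the dependence on $\xi$ is suppressed). Define the projector matrix units $\Pi_{\xi\alpha\beta}(X)=\sum_{i=1}^{d_\xi}\langle E_i^\alpha,X\rangle E_i^\beta$ and twirl matrix units $\mathrm{Twirl}_{\xi\alpha\beta}(X)=\sum_{i=1}^{d_\xi}(E_i^\alpha)^\dagger XE_i^\beta$. On linear maps $\mathcal L(V)\to\mathcal L(V)$ use $\langle\!\langle\mathcal S,\mathcal T\rangle\!\rangle=\mathrm{Tr}(\mathcal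 S^\dagger\mathcal T)=\sum_{Y\in\mathcal B}\langle\mathcal S(Y),\mathcal T(Y)\rangle$ ($\mathcal B$ any orthonormal basis of $\mathcal L(V)$). $\mathrm{Hom}_G(\mathcal L(V),\mathcal L(V))$ is the space of $G$-equivariant linear maps. *)

theory Defs
  imports "HOL-Analysis.Analysis" "HOL-Algebra.Group"
begin

text \<open>Operators on V = complex^'n are n x n complex matrices, L(V) = complex^'n^'n.\<close>

type_synonym 'n cmat = "complex^'n^'n"

definition madj :: "('n::finite) cmat \<Rightarrow> 'n cmat" where
  "madj A = (\<chi> i j. cnj (A $ j $ i))"

definition msc :: "complex \<Rightarrow> ('n::finite) cmat \<Rightarrow> 'n cmat" where
  "msc c A = (\<chi> i j. c * A $ i $ j)"

definition mtrace :: "('n::finite) cmat \<Rightarrow> complex" where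
  "mtrace A = (\<Sum>i\<in>UNIV. A $ i $ i)"

definition hs :: "('n::finite) cmat \<Rightarrow> 'n cmat \<Rightarrow> complex" where
  "hs X Y = mtrace (madj X ** Y)"

definition unitary_mat :: "('n::finite) cmat \<Rightarrow> bool" where
  "unitary_mat U \<longleftrightarrow> madj U ** U = mat 1 \<and> U ** madj U = mat 1"

definition unitary_rep :: "('g, 'b) monoid_scheme \<Rightarrow> ('g \<Rightarrow> ('n::finite) cmat) \<Rightarrow> bool" where
  "unitary_rep G r \<longleftrightarrow> group G \<and> (\<forall>g\<in>carrier G. unitary_mat (r g)) \<and>
     (\<forall>g\<in>carrier G. \<forall>h\<in>carrier G. r (g \<otimes>\<^bsub>G\<^esub> h) = r g ** r h)"

definition conj_act :: "('g \<Rightarrow> ('n::finite) cmat) \<Rightarrow> 'g \<Rightarrow> 'n cmat \<Rightarrow> 'n cmat" where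
  "conj_act r g X = r g ** X ** madj (r g)"

definition clinear_map :: "(('n::finite) cmat \<Rightarrow> 'n cmat) \<Rightarrow> bool" where
  "clinear_map T \<longleftrightarrow> (\<forall>X Y. T (X + Y) = T X + T Y) \<and> (\<forall>c X. T (msc c X) = msc c (T X))"

definition HomG :: "('g, 'b) monoid_scheme \<Rightarrow> ('g \<Rightarrow> ('n::finite) cmat) \<Rightarrow> ('n cmat \<Rightarrow> 'n cmat) set" where
  "HomG G r = {T. clinear_map T \<and> (\<forall>g\<in>carrier G. \<forall>X. T (conj_act r g X) = conj_act r g (T X))}"

definition munit :: "'n \<Rightarrow> 'n \<Rightarrow> ('n::finite) cmat" where
  "munit i j = (\<chi> k l. if k = i \<and> l = j then 1 else 0)"

text \<open>Inner product Tr(S^dagger T) = sum over an orthonormal basis Y of <S Y, T Y>.\<close>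
definition hsop :: "(('n::finite) cmat \<Rightarrow> 'n cmat) \<Rightarrow> ('n cmat \<Rightarrow> 'n cmat) \<Rightarrow> complex" where
  "hsop S T = (\<Sum>i\<in>UNIV. \<Sum>j\<in>UNIV. hs (S (munit i j)) (T (munit i j)))"

definition mspan :: "'a set \<Rightarrow> ('a \<Rightarrow> ('n::finite) cmat) \<Rightarrow> 'n cmat set" where
  "mspan I e = {X. \<exists>c. X = (\<Sum>a\<in>I. msc (c a) (e a))}"

definition msubspace :: "('n::finite) cmat set \<Rightarrow> bool" where
  "msubspace W \<longleftrightarrow> 0 \<in> W \<and> (\<forall>X\<in>W. \<forall>Y\<in>W. X + Y \<in> W) \<and> (\<forall>c. \<forall>X\<in>W. msc c X \<in> W)"

definition invariant_sub :: "('g, 'b) monoid_scheme \<Rightarrow> ('g \<Rightarrow> ('n::finite) cmat) \<Rightarrow> 'n cmat set \<Rightarrow> bool" where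
  "invariant_sub G r W \<longleftrightarrow> msubspace W \<and> (\<forall>g\<in>carrier G. \<forall>X\<in>W. conj_act r g X \<in> W)"

definition irreducible_sub :: "('g, 'b) monoid_scheme \<Rightarrow> ('g \<Rightarrow> ('n::finite) cmat) \<Rightarrow> 'n cmat set \<Rightarrow> bool" where
  "irreducible_sub G r W \<longleftrightarrow> invariant_sub G r W \<and> W \<noteq> {0} \<and>
     (\<forall>W'. W' \<subseteq> W \<longrightarrow> invariant_sub G r W' \<longrightarrow> W' = {0} \<or> W' = W)"

definition iso_sub :: "('g, 'b) monoid_scheme \<Rightarrow> ('g \<Rightarrow> ('n::finite) cmat) \<Rightarrow> 'n cmat set \<Rightarrow> 'n cmat set \<Rightarrow> bool" where
  "iso_sub G r W1 W2 \<longleftrightarrow> (\<exists>T. clinear_map T \<and> bij_betw T W1 W2 \<and>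
     (\<forall>g\<in>carrier G. \<forall>X\<in>W1. T (conj_act r g X) = conj_act r g (T X)))"

definition map_dim :: "((('n::finite) cmat \<Rightarrow> 'n cmat)) set \<Rightarrow> nat" where
  "map_dim S = (LEAST k. \<exists>f. (\<forall>l<k. f l \<in> S) \<and>
      (\<forall>T\<in>S. \<exists>c. T = (\<lambda>X. \<Sum>l<k. msc (c l) (f l X))))"

definition onb_maps :: "(('n::finite) cmat \<Rightarrow> 'n cmat) set \<Rightarrow> 'a set \<Rightarrow> ('a \<Rightarrow> ('n cmat \<Rightarrow> 'n cmat)) \<Rightarrow> bool" where
  "onb_maps S I f \<longleftrightarrow> (\<forall>a\<in>I. f a \<in> S) \<and>
     (\<forall>a\<in>I. \<forall>b\<in>I. hsop (f a) (f b) = (if a = b then 1 else 0)) \<and>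
     (\<forall>T\<in>S. \<exists>c. T = (\<lambda>X. \<Sum>a\<in>I. msc (c a) (f a X)))"

definition unitary_on :: "'a set \<Rightarrow> ('a \<Rightarrow> 'a \<Rightarrow> complex) \<Rightarrow> bool" where
  "unitary_on I U \<longleftrightarrow>
     (\<forall>a\<in>I. \<forall>b\<in>I. (\<Sum>c\<in>I. cnj (U c a) * U c b) = (if a = b then 1 else 0)) \<and>
     (\<forall>a\<in>I. \<forall>b\<in>I. (\<Sum>c\<in>I. U a c * cnj (U b c)) = (if a = b then 1 else 0))"

text \<open>Projector and twirl matrix units, with E x a i = E_i^a for type x.\<close>
definition PiU :: "('x \<Rightarrow> nat) \<Rightarrow> ('x \<Rightarrow> nat \<Rightarrow> nat \<Rightarrow> ('n::finite) cmat) \<Rightarrow> 'x \<Rightarrow> nat \<Rightarrow> nat \<Rightarrow> 'n cmat \<Rightarrow> 'n cmat" where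
  "PiU d E x a b X = (\<Sum>i\<in>{1..d x}. msc (hs (E x a i) X) (E x b i))"

definition TwirlU :: "('x \<Rightarrow> nat) \<Rightarrow> ('x \<Rightarrow> nat \<Rightarrow> nat \<Rightarrow> ('n::finite) cmat) \<Rightarrow> 'x \<Rightarrow> nat \<Rightarrow> nat \<Rightarrow> 'n cmat \<Rightarrow> 'n cmat" where
  "TwirlU d E x a b X = (\<Sum>i\<in>{1..d x}. madj (E x a i) ** X ** E x b i)"

definition idx3 :: "'x set \<Rightarrow> ('x \<Rightarrow> nat) \<Rightarrow> ('x \<times> nat \<times> nat) set" where
  "idx3 Xi m = {(x, a, b). x \<in> Xi \<and> a \<in> {1..m x} \<and> b \<in> {1..m x}}"

definition nPi where
  "nPi d E = (\<lambda>(x, a, b) X. msc (complex_of_real (1 / sqrt (real (d x)))) (PiU d E x a b X))"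

definition nTwirl where
  "nTwirl d E = (\<lambda>(x, a, b) X. msc (complex_of_real (1 / sqrt (real (d x)))) (TwirlU d E x a b X))"

end

(* By Schur's lemma the component of an equivariant map T from the copy E_{xi alpha} to
   the copy E_{rho beta} vanishes unless xi = rho, and is then, through the identifications
   phi, a scalar lambda_{alpha beta}; comparing coefficients in the basis E gives
   T = sum lambda_{alpha beta} Pi_{xi alpha beta}, so the Pi span Hom_G.  Both Pi_{xi alpha beta}
   and Twirl_{xi alpha beta} are of the form sum_i Phi(E_i^alpha, E_i^beta) with Phi
   sesquilinear, and g acts on every basis {E_i^alpha}_i by the same unitary matrix; this
   makes them equivariant.  The rank-one formulas
   <<<A,.>B, <C,.>D>> = <C,A><B,D> = <<A^dagger . B, C^dagger . D>> show that both families
   are orthogonal with squared norms d_xi.  An orthonormal family with as many members as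
   an orthonormal basis is itself a basis, which gives the dimension and the second basis,
   and the transition matrix between two orthonormal bases is unitary. *)
theory Submission
  imports Defs "Jordan_Normal_Form.Spectral_Radius"
begin

no_notation Matrix.vec_index (infixl "$" 100)

lemmas cvec_eq_iff = Finite_Cartesian_Product.vec_eq_iff

lemma msc_nth [simp]: "msc c A $ i $ j = c * A $ i $ j"
  by (simp add: msc_def)

lemma madj_nth [simp]: "madj A $ i $ j = cnj (A $ j $ i)"
  by (simp add: madj_def)

lemma msc_add: "msc c (A + B) = msc c A + msc c B"
  by (simp add: cvec_eq_iff algebra_simps)

lemma msc_add_left: "msc (c + c') A = msc c A + msc c' A"
  by (simp add: cvec_eq_iff algebra_simps)

lemma msc_msc: "msc c (msc c' A) = msc (c * c') A"
  by (simp add: cvec_eq_iff)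

lemma msc_one [simp]: "msc 1 A = A"
  by (simp add: cvec_eq_iff)

lemma msc_zero_left [simp]: "msc 0 A = 0"
  by (simp add: cvec_eq_iff)

lemma msc_zero_right [simp]: "msc c 0 = 0"
  by (simp add: cvec_eq_iff)

lemma sum_nth_nth: "sum f S $ i $ j = (\<Sum>x\<in>S. f x $ i $ j)"
  by (induct S rule: infinite_finite_induct) auto

lemma msc_sum: "msc c (sum f S) = (\<Sum>x\<in>S. msc c (f x))"
  by (simp add: cvec_eq_iff sum_nth_nth sum_distrib_left)

lemma msc_sum_left: "msc (sum f S) A = (\<Sum>x\<in>S. msc (f x) A)"
  by (simp add: cvec_eq_iff sum_nth_nth sum_distrib_right)

lemma add_msc_uminus_eq_0_iff: "A + msc (- c) B = 0 \<longleftrightarrow> A = msc c B"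
  by (auto simp: cvec_eq_iff)

lemma madj_mult: "madj (A ** B) = madj B ** madj A"
  unfolding matrix_matrix_mult_def by (simp add: cvec_eq_iff mult.commute)

lemma madj_madj [simp]: "madj (madj A) = A"
  by (simp add: cvec_eq_iff)

lemma madj_add: "madj (A + B) = madj A + madj B"
  by (simp add: cvec_eq_iff)

lemma madj_msc: "madj (msc c A) = msc (cnj c) (madj A)"
  by (simp add: cvec_eq_iff)

lemma madj_sum: "madj (sum f S) = (\<Sum>x\<in>S. madj (f x))"
  by (induct S rule: infinite_finite_induct) (auto simp: madj_add cvec_eq_iff)

lemma msc_mult_left: "msc c A ** B = msc c (A ** B)"
  unfolding matrix_matrix_mult_def by (simp add: cvec_eq_iff sum_distrib_left mult.assoc)

lemma msc_mult_right: "A ** msc c B = msc c (A ** B)"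
  unfolding matrix_matrix_mult_def
  by (simp add: cvec_eq_iff sum_distrib_left mult.left_commute)

lemma matrix_add_rdistrib_cmat: "(A + B) ** C = A ** C + B ** (C :: 'n::finite cmat)"
  unfolding matrix_matrix_mult_def by (simp add: cvec_eq_iff sum.distrib distrib_right)

lemma sum_matrix_mult_left: "sum f S ** B = (\<Sum>x\<in>S. f x ** (B :: 'n::finite cmat))"
  by (induct S rule: infinite_finite_induct) (auto simp: matrix_add_rdistrib_cmat)

lemma sum_matrix_mult_right: "B ** sum f S = (\<Sum>x\<in>S. B ** (f x :: 'n::finite cmat))"
  by (induct S rule: infinite_finite_induct) (auto simp: matrix_add_ldistrib)

lemma mtrace_mult_commute: "mtrace (A ** B) = mtrace (B ** A)"
  unfolding mtrace_def matrix_matrix_mult_def by (simp, subst sum.swap) (simp add: mult.commute)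

lemma hs_entrywise: "hs X Y = (\<Sum>i\<in>UNIV. \<Sum>k\<in>UNIV. cnj (X $ i $ k) * Y $ i $ k)"
  unfolding hs_def mtrace_def matrix_matrix_mult_def by (simp, subst sum.swap) simp

lemma hs_add_left: "hs (X + Y) Z = hs X Z + hs Y Z"
  by (simp add: hs_entrywise algebra_simps sum.distrib)

lemma hs_add_right: "hs X (Y + Z) = hs X Y + hs X Z"
  by (simp add: hs_entrywise algebra_simps sum.distrib)

lemma hs_msc_left: "hs (msc c X) Y = cnj c * hs X Y"
  by (simp add: hs_entrywise sum_distrib_left algebra_simps)

lemma hs_msc_right: "hs X (msc c Y) = c * hs X Y"
  by (simp add: hs_entrywise sum_distrib_left algebra_simps)

lemma hs_zero_left [simp]: "hs 0 X = 0"
  by (simp add: hs_entrywise)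

lemma hs_zero_right [simp]: "hs X 0 = 0"
  by (simp add: hs_entrywise)

lemma hs_sum_left: "hs (sum f S) X = (\<Sum>x\<in>S. hs (f x) X)"
  by (induct S rule: infinite_finite_induct) (auto simp: hs_add_left)

lemma hs_sum_right: "hs X (sum f S) = (\<Sum>x\<in>S. hs X (f x))"
  by (induct S rule: infinite_finite_induct) (auto simp: hs_add_right)

lemma cnj_hs: "cnj (hs X Y) = hs Y X"
  by (simp add: hs_entrywise mult.commute)

lemma hs_conj_adjoint: "hs A (madj R ** B ** R) = hs (R ** A ** madj R) B"
proof -
  have "hs A (madj R ** B ** R) = mtrace ((madj A ** madj R ** B) ** R)"
    unfolding hs_def by (simp add: matrix_mul_assoc)
  also have "\<dots> = mtrace (R ** (madj A ** madj R ** B))"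
    by (rule mtrace_mult_commute)
  also have "\<dots> = mtrace (madj (R ** A ** madj R) ** B)"
    by (simp add: madj_mult matrix_mul_assoc)
  finally show ?thesis
    unfolding hs_def .
qed

definition orthonormal_on :: "'a set \<Rightarrow> ('a \<Rightarrow> ('n::finite) cmat) \<Rightarrow> bool" where
  "orthonormal_on I e \<longleftrightarrow> (\<forall>i\<in>I. \<forall>j\<in>I. hs (e i) (e j) = (if i = j then 1 else 0))"

lemma mspan_combination_mem: "(\<Sum>i\<in>I. msc (c i) (e i)) \<in> mspan I e"
  unfolding mspan_def by blast

lemma mspan_generator_mem:
  assumes "finite I" "k \<in> I"
  shows "e k \<in> mspan I e"
proof -
  have "(\<Sum>i\<in>I. msc (if i = k then 1 else 0) (e i)) = e k"
    using assms by (simp add: if_distrib[of "\<lambda>c. msc c _"] cong: if_cong)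
  then show ?thesis
    by (metis mspan_combination_mem)
qed

lemma mspan_empty: "mspan {} e = {0}"
  by (simp add: mspan_def)

lemma hs_orthonormal_combination:
  assumes "orthonormal_on I e" "finite I" "k \<in> I"
  shows "hs (e k) (\<Sum>i\<in>I. msc (c i) (e i)) = c k"
proof -
  have "hs (e k) (\<Sum>i\<in>I. msc (c i) (e i)) = (\<Sum>i\<in>I. c i * (if k = i then 1 else 0))"
    using assms(1,3) unfolding orthonormal_on_def
    by (auto simp: hs_sum_right hs_msc_right intro: sum.cong)
  also have "\<dots> = c k"
    using assms(2,3) by (simp add: mult_delta_right)
  finally show ?thesis .
qed

lemma mspan_orthonormal_expansion:
  assumes "orthonormal_on I e" "finite I" "X \<in> mspan I e"
  shows "X = (\<Sum>i\<in>I. msc (hs (e i) X) (e i))"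
proof -
  obtain c where c: "X = (\<Sum>i\<in>I. msc (c i) (e i))"
    using assms(3) unfolding mspan_def by blast
  have "(\<Sum>i\<in>I. msc (hs (e i) X) (e i)) = (\<Sum>i\<in>I. msc (c i) (e i))"
    by (rule sum.cong) (simp_all add: c hs_orthonormal_combination[OF assms(1,2)])
  with c show ?thesis
    by simp
qed

lemma mspan_orthonormal_eqI:
  assumes "orthonormal_on I e" "finite I" "X \<in> mspan I e" "Y \<in> mspan I e"
    and "\<And>i. i \<in> I \<Longrightarrow> hs (e i) X = hs (e i) Y"
  shows "X = Y"
  using mspan_orthonormal_expansion[OF assms(1,2,3)] mspan_orthonormal_expansion[OF assms(1,2,4)]
    assms(5) by (metis (no_types, lifting) sum.cong)

lemma sum_vanishing_outside_inj_image:
  assumes "finite A" "h ` T \<subseteq> A" "inj_on h T" "\<And>p. p \<in> A \<Longrightarrow> p \<notin> h ` T \<Longrightarrow> f p = 0"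
  shows "sum f A = (\<Sum>t\<in>T. f (h t))"
proof -
  have "sum f A = sum f (h ` T)"
    by (rule sum.mono_neutral_right) (use assms in auto)
  also have "\<dots> = (\<Sum>t\<in>T. f (h t))"
    using sum.reindex[OF assms(3)] by simp
  finally show ?thesis .
qed

lemma mult_mat_vec_nth_sum:
  assumes "k < d" "A \<in> carrier_mat d d" "v \<in> carrier_vec d"
  shows "vec_index (A *\<^sub>v v) k = (\<Sum>l<d. A $$ (k, l) * vec_index v l)"
  using assms by (simp add: scalar_prod_def lessThan_atLeast0)

lemma vec_nonzero_imp_ex_nth_nonzero:
  assumes "v \<in> carrier_vec d" "v \<noteq> 0\<^sub>v d"
  shows "\<exists>k<d. vec_index v k \<noteq> 0"
  using assms by (metis eq_vecI carrier_vecD index_zero_vec(1,2))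

lemma exists_eigenvector:
  fixes M :: "nat \<Rightarrow> nat \<Rightarrow> complex"
  assumes "0 < d"
  shows "\<exists>\<mu> v. (\<exists>k<d. v k \<noteq> 0) \<and> (\<forall>k<d. (\<Sum>l<d. M k l * v l) = \<mu> * v k)"
proof -
  define A where "A = Matrix.mat d d (\<lambda>(k, l). M k l)"
  have A: "A \<in> carrier_mat d d"
    unfolding A_def by simp
  obtain \<mu> where "\<mu> \<in> spectrum A"
    using spectrum_non_empty[OF A assms] by blast
  then obtain v where "eigenvector A v \<mu>"
    unfolding spectrum_def eigenvalue_def by blast
  then have v: "v \<in> carrier_vec d" "v \<noteq> 0\<^sub>v d" and Av: "A *\<^sub>v v = \<mu> \<cdot>\<^sub>v v"
    unfolding eigenvector_def using A by auto
  have "(\<Sum>l<d. M k l * vec_index v l) = \<mu> * vec_index v k" if k: "k < d" for k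
  proof -
    have "vec_index (A *\<^sub>v v) k = (\<Sum>l<d. A $$ (k, l) * vec_index v l)"
      by (rule mult_mat_vec_nth_sum[OF k A v(1)])
    also have "\<dots> = (\<Sum>l<d. M k l * vec_index v l)"
      by (rule sum.cong) (auto simp: A_def k)
    finally show ?thesis
      using Av k v(1) by simp
  qed
  then show ?thesis
    using vec_nonzero_imp_ex_nth_nonzero[OF v] by blast
qed

lemma underdetermined_system_nontrivial_solution:
  fixes c :: "nat \<Rightarrow> nat \<Rightarrow> complex"
  assumes "k < N"
  shows "\<exists>w. (\<exists>a<N. w a \<noteq> 0) \<and> (\<forall>l<k. (\<Sum>a<N. c a l * w a) = 0)"
proof -
  define A where "A = Matrix.mat N N (\<lambda>(l, a). if l < k then c a l else 0)"
  have A: "A \<in> carrier_mat N N"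
    unfolding A_def by simp
  have prod_0: "(\<Prod>i = 0..<N. A $$ (i, p i)) = 0" if "p permutes {0..<N}" for p
  proof -
    have "p k < N"
      using that assms by (simp add: permutes_in_image)
    then show ?thesis
      using assms by (intro prod_zero bexI[of _ k]) (auto simp: A_def)
  qed
  have "Determinant.det A = 0"
    unfolding det_def'[OF A] by (rule sum.neutral) (simp add: prod_0)
  then obtain v where v: "v \<in> carrier_vec N" "v \<noteq> 0\<^sub>v N" and Av: "A *\<^sub>v v = 0\<^sub>v N"
    using det_0_iff_vec_prod_zero[OF A] by blast
  have "(\<Sum>a<N. c a l * vec_index v a) = 0" if l: "l < k" for l
  proof -
    have lN: "l < N"
      using l assms by simp
    have "vec_index (A *\<^sub>v v) l = (\<Sum>a<N. A $$ (l, a) * vec_index v a)"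
      by (rule mult_mat_vec_nth_sum[OF lN A v(1)])
    also have "\<dots> = (\<Sum>a<N. c a l * vec_index v a)"
      by (rule sum.cong) (auto simp: A_def l lN)
    finally show ?thesis
      using Av lN by simp
  qed
  then show ?thesis
    using vec_nonzero_imp_ex_nth_nonzero[OF v] by blast
qed

lemma orthonormal_columns_imp_orthonormal_rows:
  fixes U :: "nat \<Rightarrow> nat \<Rightarrow> complex"
  assumes cols: "\<And>a b. a < N \<Longrightarrow> b < N \<Longrightarrow> (\<Sum>c<N. cnj (U c a) * U c b) = (if a = b then 1 else 0)"
    and ab: "a < N" "b < N"
  shows "(\<Sum>c<N. U a c * cnj (U b c)) = (if a = b then 1 else 0)"
proof -
  define A where "A = Matrix.mat N N (\<lambda>(c, a). U c a)"
  define B where "B = Matrix.mat N N (\<lambda>(a, c). cnj (U c a))"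
  have A: "A \<in> carrier_mat N N" and B: "B \<in> carrier_mat N N"
    unfolding A_def B_def by auto
  have "B * A = 1\<^sub>m N"
  proof (rule eq_matI)
    fix a b
    assume "a < dim_row (1\<^sub>m N)" "b < dim_col (1\<^sub>m N)"
    then have ab: "a < N" "b < N"
      by auto
    have "(B * A) $$ (a, b) = (\<Sum>c<N. cnj (U c a) * U c b)"
      using ab A B by (simp add: scalar_prod_def lessThan_atLeast0 A_def B_def)
    then show "(B * A) $$ (a, b) = 1\<^sub>m N $$ (a, b)"
      using cols ab by simp
  qed (use A B in auto)
  then have AB: "A * B = 1\<^sub>m N"
    by (rule mat_mult_left_right_inverse[OF B A])
  have "(\<Sum>c<N. U a c * cnj (U b c)) = (A * B) $$ (a, b)"
    using ab A B by (simp add: scalar_prod_def lessThan_atLeast0 A_def B_def)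
  then show ?thesis
    using AB ab by simp
qed

lemma unitary_on_if_orthonormal_columns:
  fixes U :: "'a \<Rightarrow> 'a \<Rightarrow> complex"
  assumes I: "finite I"
    and cols: "\<forall>a\<in>I. \<forall>b\<in>I. (\<Sum>c\<in>I. cnj (U c a) * U c b) = (if a = b then 1 else 0)"
  shows "unitary_on I U"
proof -
  obtain e where e: "bij_betw e {..<card I} I"
    using ex_bij_betw_nat_finite[OF I] by (auto simp: lessThan_atLeast0)
  define N where "N = card I"
  have e_bij: "bij_betw e {..<N} I"
    using e unfolding N_def .
  have e_inj: "e t = e s \<longleftrightarrow> t = s" if "t < N" "s < N" for t s
    using inj_on_eq_iff[OF bij_betw_imp_inj_on[OF e_bij]] that by simp
  have e_mem: "e t \<in> I" if "t < N" for t
    using bij_betw_apply[OF e_bij] that by simp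
  have cols_e: "(\<Sum>c<N. cnj (U (e c) (e a)) * U (e c) (e b)) = (if a = b then 1 else 0)"
    if "a < N" "b < N" for a b
  proof -
    have "(\<Sum>c<N. cnj (U (e c) (e a)) * U (e c) (e b)) = (\<Sum>c\<in>I. cnj (U c (e a)) * U c (e b))"
      by (rule sum.reindex_bij_betw[OF e_bij])
    also have "\<dots> = (if a = b then 1 else 0)"
      using cols e_mem[OF that(1)] e_mem[OF that(2)] e_inj[OF that] by simp
    finally show ?thesis .
  qed
  have rows: "(\<Sum>c<N. U (e a) (e c) * cnj (U (e b) (e c))) = (if a = b then 1 else 0)"
    if "a < N" "b < N" for a b
    using orthonormal_columns_imp_orthonormal_rows[where U = "\<lambda>c a. U (e c) (e a)", OF cols_e that]
    by simp
  have "(\<Sum>c\<in>I. U a c * cnj (U b c)) = (if a = b then 1 else 0)" if ab: "a \<in> I" "b \<in> I" for a b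
  proof -
    obtain t s where ts: "t < N" "s < N" "a = e t" "b = e s"
      using ab unfolding bij_betw_imp_surj_on[OF e_bij, symmetric] by blast
    have "(\<Sum>c\<in>I. U a c * cnj (U b c)) = (\<Sum>c<N. U (e t) (e c) * cnj (U (e s) (e c)))"
      unfolding ts(3,4) by (rule sum.reindex_bij_betw[OF e_bij, symmetric])
    also have "\<dots> = (if a = b then 1 else 0)"
      unfolding rows[OF ts(1,2)] ts(3,4) e_inj[OF ts(1,2)] ..
    finally show ?thesis .
  qed
  with cols show ?thesis
    unfolding unitary_on_def by blast
qed

section \<open>Unitary representations and equivariant maps\<close>

lemma conj_act_add: "conj_act r g (X + Y) = conj_act r g X + conj_act r g Y"
  unfolding conj_act_def by (simp add: matrix_add_ldistrib matrix_add_rdistrib_cmat)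

lemma conj_act_msc: "conj_act r g (msc c X) = msc c (conj_act r g X)"
  unfolding conj_act_def by (simp add: msc_mult_left msc_mult_right)

lemma conj_act_zero [simp]: "conj_act r g 0 = 0"
  using conj_act_msc[of r g 0 0] by simp

lemma conj_act_sum: "conj_act r g (sum f S) = (\<Sum>x\<in>S. conj_act r g (f x))"
  by (induct S rule: infinite_finite_induct) (auto simp: conj_act_add)

context
  fixes G :: "('g, 'b) monoid_scheme" and r :: "'g \<Rightarrow> complex^'n::finite^'n"
  assumes rep: "unitary_rep G r"
begin

lemma unitary_rep_group: "group G"
  using rep unfolding unitary_rep_def by simp

lemma unitary_rep_unitary:
  assumes "g \<in> carrier G"
  shows "madj (r g) ** r g = Finite_Cartesian_Product.mat 1"
    and "r g ** madj (r g) = Finite_Cartesian_Product.mat 1"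
  using rep assms unfolding unitary_rep_def unitary_mat_def by simp_all

lemma unitary_rep_mult_cancel:
  assumes "g \<in> carrier G"
  shows "Y ** madj (r g) ** r g = Y" and "Y ** r g ** madj (r g) = Y"
  using unitary_rep_unitary[OF assms] by (metis matrix_mul_assoc matrix_mul_rid)+

lemma unitary_rep_inv:
  assumes g: "g \<in> carrier G"
  shows "r (inv\<^bsub>G\<^esub> g) = madj (r g)"
proof -
  interpret group G
    by (rule unitary_rep_group)
  have "r g ** r (inv\<^bsub>G\<^esub> g) ** r g = r g"
    using rep g unfolding unitary_rep_def by (metis inv_closed m_closed r_inv l_one)
  then have "madj (r g) ** (r g ** r (inv\<^bsub>G\<^esub> g) ** r g) ** madj (r g) = madj (r g) ** r g ** madj (r g)"
    by simp
  then show ?thesis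
    by (simp add: matrix_mul_assoc unitary_rep_unitary[OF g] unitary_rep_mult_cancel[OF g])
qed

lemma conj_act_inv:
  "g \<in> carrier G \<Longrightarrow> conj_act r (inv\<^bsub>G\<^esub> g) X = madj (r g) ** X ** r g"
  unfolding conj_act_def by (simp add: unitary_rep_inv)

lemma conj_act_conj_act_inv:
  assumes "g \<in> carrier G"
  shows "conj_act r g (conj_act r (inv\<^bsub>G\<^esub> g) X) = X"
proof -
  have "conj_act r g (conj_act r (inv\<^bsub>G\<^esub> g) X) = (r g ** madj (r g)) ** X ** (r g ** madj (r g))"
    unfolding conj_act_inv[OF assms] by (simp add: conj_act_def matrix_mul_assoc)
  then show ?thesis
    using unitary_rep_unitary(2)[OF assms] by simp
qed

lemma hs_conj_act:
  assumes "g \<in> carrier G"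
  shows "hs (conj_act r g A) (conj_act r g B) = hs A B"
proof -
  have "hs (conj_act r g A) (conj_act r g B) = hs A (madj (r g) ** (r g ** B ** madj (r g)) ** r g)"
    unfolding conj_act_def by (rule hs_conj_adjoint[symmetric])
  also have "\<dots> = hs A ((madj (r g) ** r g) ** B ** (madj (r g) ** r g))"
    by (simp only: matrix_mul_assoc)
  finally show ?thesis
    using unitary_rep_unitary(1)[OF assms] by simp
qed

lemma conj_act_sandwich:
  assumes "g \<in> carrier G"
  shows "madj (conj_act r g A) ** conj_act r g X ** conj_act r g B = conj_act r g (madj A ** X ** B)"
  unfolding conj_act_def by (simp add: madj_mult matrix_mul_assoc unitary_rep_mult_cancel[OF assms])

end

lemma clinear_map_zero: "clinear_map T \<Longrightarrow> T 0 = 0"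
  unfolding clinear_map_def by (metis msc_zero_left)

lemma clinear_map_sum: "clinear_map T \<Longrightarrow> T (sum f S) = (\<Sum>x\<in>S. T (f x))"
  by (induct S rule: infinite_finite_induct) (auto simp: clinear_map_zero clinear_map_def)

lemma clinear_map_lincomb:
  "clinear_map T \<Longrightarrow> T (\<Sum>x\<in>S. msc (c x) (f x)) = (\<Sum>x\<in>S. msc (c x) (T (f x)))"
  by (simp add: clinear_map_sum) (simp add: clinear_map_def)

lemma HomG_clinear: "T \<in> HomG G r \<Longrightarrow> clinear_map T"
  unfolding HomG_def by auto

lemma HomG_commute: "T \<in> HomG G r \<Longrightarrow> g \<in> carrier G \<Longrightarrow> T (conj_act r g X) = conj_act r g (T X)"
  unfolding HomG_def by auto

lemma HomG_comp: "S \<in> HomG G r \<Longrightarrow> T \<in> HomG G r \<Longrightarrow> (\<lambda>X. S (T X)) \<in> HomG G r"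
  unfolding HomG_def clinear_map_def by auto

lemma HomG_msc: "T \<in> HomG G r \<Longrightarrow> (\<lambda>X. msc c (T X)) \<in> HomG G r"
  unfolding HomG_def clinear_map_def by (auto simp: msc_add msc_msc mult.commute conj_act_msc)

lemma HomG_add_msc: "T \<in> HomG G r \<Longrightarrow> (\<lambda>X. T X + msc c X) \<in> HomG G r"
  unfolding HomG_def clinear_map_def
  by (auto simp: msc_add msc_msc mult.commute conj_act_add conj_act_msc)

section \<open>Schur's lemma\<close>

lemma HomG_kernel_invariant:
  assumes W: "invariant_sub G r W" and T: "T \<in> HomG G r"
  shows "invariant_sub G r {X \<in> W. T X = 0}"
proof -
  have lin: "clinear_map T"
    by (rule HomG_clinear[OF T])
  show ?thesis
    using W clinear_map_zero[OF lin] lin HomG_commute[OF T]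
    unfolding invariant_sub_def msubspace_def clinear_map_def by auto
qed

lemma HomG_image_invariant:
  assumes W: "invariant_sub G r W" and T: "T \<in> HomG G r"
  shows "invariant_sub G r (T ` W)"
proof -
  have lin: "clinear_map T"
    by (rule HomG_clinear[OF T])
  have "0 \<in> T ` W"
    using W clinear_map_zero[OF lin] unfolding invariant_sub_def msubspace_def by force
  moreover have "T X + T Y \<in> T ` W" "msc c (T X) \<in> T ` W" if "X \<in> W" "Y \<in> W" for X Y c
    using W lin that unfolding invariant_sub_def msubspace_def clinear_map_def
    by (metis image_eqI)+
  moreover have "conj_act r g (T X) \<in> T ` W" if "g \<in> carrier G" "X \<in> W" for g X
    using W HomG_commute[OF T] that unfolding invariant_sub_def by (metis image_eqI)
  ultimately show ?thesis
    unfolding invariant_sub_def msubspace_def by blast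
qed

lemma irreducible_sub_invariant: "irreducible_sub G r W \<Longrightarrow> invariant_sub G r W"
  unfolding irreducible_sub_def by simp

lemma irreducible_sub_nonzero: "irreducible_sub G r W \<Longrightarrow> W \<noteq> {0}"
  unfolding irreducible_sub_def by simp

lemma irreducible_sub_minimal:
  "irreducible_sub G r W \<Longrightarrow> W' \<subseteq> W \<Longrightarrow> invariant_sub G r W' \<Longrightarrow> W' = {0} \<or> W' = W"
  unfolding irreducible_sub_def by simp

lemma HomG_vanishes_if_kernel_nontrivial:
  assumes W: "irreducible_sub G r W" and T: "T \<in> HomG G r"
    and X0: "X0 \<in> W" "X0 \<noteq> 0" "T X0 = 0"
  shows "\<forall>X\<in>W. T X = 0"
proof -
  have "{X \<in> W. T X = 0} = {0} \<or> {X \<in> W. T X = 0} = W"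
    using irreducible_sub_minimal[OF W _ HomG_kernel_invariant[OF irreducible_sub_invariant[OF W] T]]
    by blast
  moreover have "X0 \<in> {X \<in> W. T X = 0}"
    using X0 by simp
  ultimately have "{X \<in> W. T X = 0} = W"
    using X0(2) by blast
  then show ?thesis
    by blast
qed

lemma HomG_vanishes_on_nonisomorphic:
  assumes W1: "irreducible_sub G r W1" and W2: "irreducible_sub G r W2"
    and noniso: "\<not> iso_sub G r W1 W2"
    and T: "T \<in> HomG G r" and into: "T ` W1 \<subseteq> W2"
  shows "\<forall>X\<in>W1. T X = 0"
proof (rule ccontr)
  assume nonzero: "\<not> (\<forall>X\<in>W1. T X = 0)"
  have lin: "clinear_map T"
    by (rule HomG_clinear[OF T])
  have kernel: "X = 0" if "X \<in> W1" "T X = 0" for X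
    using HomG_vanishes_if_kernel_nontrivial[OF W1 T that(1) _ that(2)] nonzero by blast
  have "inj_on T W1"
  proof (rule inj_onI)
    fix X Y
    assume XY: "X \<in> W1" "Y \<in> W1" "T X = T Y"
    have "msubspace W1"
      using irreducible_sub_invariant[OF W1] unfolding invariant_sub_def by simp
    then have "X + msc (- 1) Y \<in> W1"
      using XY(1,2) unfolding msubspace_def by simp
    moreover have "T (X + msc (- 1) Y) = 0"
      using lin XY(3) unfolding clinear_map_def by (simp add: add_msc_uminus_eq_0_iff)
    ultimately have "X + msc (- 1) Y = 0"
      by (rule kernel)
    then show "X = Y"
      using add_msc_uminus_eq_0_iff[of X 1 Y] by simp
  qed
  moreover have "T ` W1 = W2"
  proof -
    have "T ` W1 = {0} \<or> T ` W1 = W2"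
      using irreducible_sub_minimal[OF W2 into HomG_image_invariant[OF irreducible_sub_invariant[OF W1] T]] .
    moreover have "T ` W1 \<noteq> {0}"
      using nonzero by auto
    ultimately show ?thesis
      by blast
  qed
  ultimately have "iso_sub G r W1 W2"
    unfolding iso_sub_def bij_betw_def using lin HomG_commute[OF T] by blast
  with noniso show False ..
qed

lemma clinear_eigenvector_in_orthonormal_span:
  fixes n :: nat
  assumes lin: "clinear_map T" and e: "orthonormal_on {1..n} e" and n: "0 < n"
    and into: "\<forall>X\<in>mspan {1..n} e. T X \<in> mspan {1..n} e"
  shows "\<exists>\<mu> X. X \<in> mspan {1..n} e \<and> X \<noteq> 0 \<and> T X = msc \<mu> X"
proof -
  define M where "M k l = hs (e (k + 1)) (T (e (l + 1)))" for k l
  obtain \<mu> v where v0: "\<exists>k<n. v k \<noteq> 0" and ev: "\<forall>k<n. (\<Sum>l<n. M k l * v l) = \<mu> * v k"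
    using exists_eigenvector[OF n, of M] by blast
  define X where "X = (\<Sum>i\<in>{1..n}. msc (v (i - 1)) (e i))"
  have X: "X \<in> mspan {1..n} e"
    unfolding X_def by (rule mspan_combination_mem)
  have hs_X: "hs (e k) X = v (k - 1)" if "k \<in> {1..n}" for k
    unfolding X_def using hs_orthonormal_combination[OF e _ that] by simp
  have "X \<noteq> 0"
  proof
    assume "X = 0"
    moreover obtain k where "k < n" "v k \<noteq> 0"
      using v0 by blast
    ultimately show False
      using hs_X[of "k + 1"] by simp
  qed
  moreover have "T X = msc \<mu> X"
  proof (rule mspan_orthonormal_eqI[OF e])
    show "T X \<in> mspan {1..n} e" "msc \<mu> X \<in> mspan {1..n} e"
      using into X by (auto simp: X_def msc_sum msc_msc intro: mspan_combination_mem)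
    fix k
    assume k: "k \<in> {1..n}"
    have "hs (e k) (T X) = (\<Sum>i\<in>{1..n}. M (k - 1) (i - 1) * v (i - 1))"
      unfolding X_def clinear_map_lincomb[OF lin]
      using k by (auto simp: hs_sum_right hs_msc_right M_def mult.commute intro: sum.cong)
    also have "\<dots> = (\<Sum>l<n. M (k - 1) l * v l)"
      by (rule sum.reindex_bij_witness[of _ "\<lambda>l. l + 1" "\<lambda>i. i - 1"]) auto
    also have "\<dots> = hs (e k) (msc \<mu> X)"
    proof -
      have "k - 1 < n"
        using k by auto
      then show ?thesis
        using ev hs_X[OF k] by (simp add: hs_msc_right)
    qed
    finally show "hs (e k) (T X) = hs (e k) (msc \<mu> X)" .
  qed simp
  ultimately show ?thesis
    using X by blast
qed

lemma HomG_scalar_on_irreducible: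
  fixes n :: nat
  assumes W: "irreducible_sub G r (mspan {1..n} e)" and e: "orthonormal_on {1..n} e"
    and T: "T \<in> HomG G r" and into: "\<forall>X\<in>mspan {1..n} e. T X \<in> mspan {1..n} e"
  shows "\<exists>\<mu>. \<forall>X\<in>mspan {1..n} e. T X = msc \<mu> X"
proof -
  have "0 < n"
    using irreducible_sub_nonzero[OF W] mspan_empty[of e] by (cases n) auto
  then obtain \<mu> X0 where X0: "X0 \<in> mspan {1..n} e" "X0 \<noteq> 0" "T X0 = msc \<mu> X0"
    using clinear_eigenvector_in_orthonormal_span[OF HomG_clinear[OF T] e _ into] by blast
  define T' where "T' X = T X + msc (- \<mu>) X" for X
  have "T' \<in> HomG G r"
    unfolding T'_def by (rule HomG_add_msc[OF T])
  moreover have "T' X0 = 0"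
    unfolding T'_def X0(3) by (simp add: add_msc_uminus_eq_0_iff)
  ultimately have "\<forall>X\<in>mspan {1..n} e. T' X = 0"
    using HomG_vanishes_if_kernel_nontrivial[OF W _ X0(1,2)] by blast
  then show ?thesis
    unfolding T'_def add_msc_uminus_eq_0_iff by blast
qed

section \<open>The inner product on maps L(V) \<Rightarrow> L(V)\<close>

type_synonym 'n cmap = "'n cmat \<Rightarrow> 'n cmat"

lemma munit_nth [simp]: "munit i j $ k $ l = (if k = i \<and> l = j then 1 else 0)"
  by (simp add: munit_def)

lemma hs_munit: "hs A (munit i j) = cnj (A $ i $ j)"
proof -
  have "hs A (munit i j) = (\<Sum>k\<in>UNIV. \<Sum>l\<in>UNIV. if k = i \<and> l = j then cnj (A $ k $ l) else 0)"
    unfolding hs_entrywise by (intro sum.cong) auto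
  also have "\<dots> = (\<Sum>k\<in>UNIV. if k = i then (\<Sum>l\<in>UNIV. if l = j then cnj (A $ k $ l) else 0) else 0)"
    by (intro sum.cong) auto
  finally show ?thesis
    by simp
qed

lemma hsop_add_left: "hsop (\<lambda>X. F X + H X) T = hsop F T + hsop H T"
  unfolding hsop_def by (simp add: hs_add_left sum.distrib)

lemma hsop_add_right: "hsop T (\<lambda>X. F X + H X) = hsop T F + hsop T H"
  unfolding hsop_def by (simp add: hs_add_right sum.distrib)

lemma hsop_msc_left: "hsop (\<lambda>X. msc c (F X)) T = cnj c * hsop F T"
  unfolding hsop_def by (simp add: hs_msc_left sum_distrib_left)

lemma hsop_msc_right: "hsop T (\<lambda>X. msc c (F X)) = c * hsop T F"
  unfolding hsop_def by (simp add: hs_msc_right sum_distrib_left)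

lemma hsop_zero_left [simp]: "hsop (\<lambda>X. 0) T = 0"
  by (simp add: hsop_def)

lemma hsop_zero_right [simp]: "hsop T (\<lambda>X. 0) = 0"
  by (simp add: hsop_def)

lemma hsop_sum_left: "hsop (\<lambda>X. \<Sum>a\<in>A. F a X) T = (\<Sum>a\<in>A. hsop (F a) T)"
  by (induct A rule: infinite_finite_induct) (simp_all add: hsop_add_left)

lemma hsop_sum_right: "hsop T (\<lambda>X. \<Sum>a\<in>A. F a X) = (\<Sum>a\<in>A. hsop T (F a))"
  by (induct A rule: infinite_finite_induct) (simp_all add: hsop_add_right)

lemma hsop_lincomb_right:
  "hsop T (\<lambda>X. \<Sum>a\<in>A. msc (c a) (F a X)) = (\<Sum>a\<in>A. c a * hsop T (F a))"
  by (simp add: hsop_sum_right hsop_msc_right)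

lemma cnj_hsop: "cnj (hsop S T) = hsop T S"
  unfolding hsop_def by (simp add: cnj_hs)

lemma hsop_rank_one:
  "hsop (\<lambda>X. msc (hs A X) B) (\<lambda>X. msc (hs C X) D) = hs C A * hs B D"
proof -
  have "hsop (\<lambda>X. msc (hs A X) B) (\<lambda>X. msc (hs C X) D) =
      (\<Sum>i\<in>UNIV. \<Sum>j\<in>UNIV. cnj (C $ i $ j) * A $ i $ j * hs B D)"
    unfolding hsop_def
    by (simp add: hs_msc_left hs_msc_right hs_munit mult.commute mult.left_commute)
  also have "\<dots> = hs C A * hs B D"
    unfolding hs_entrywise by (simp add: sum_distrib_right)
  finally show ?thesis .
qed

lemma sandwich_munit_nth: "(madj A ** munit i j ** B) $ k $ l = cnj (A $ i $ k) * B $ j $ l"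
proof -
  have row: "(madj A ** munit i j) $ k $ q = (if q = j then cnj (A $ i $ k) else 0)" for q
    by (cases "q = j") (simp_all add: matrix_matrix_mult_def mult_delta_right)
  show ?thesis
    by (simp add: matrix_matrix_mult_def[of "madj A ** munit i j"] row if_distrib[of "\<lambda>x. x * _"]
        cong: if_cong)
qed

lemma hsop_sandwich:
  "hsop (\<lambda>X. madj A ** X ** B) (\<lambda>X. madj C ** X ** D) = hs C A * hs B D"
proof -
  have "hs (madj A ** munit i j ** B) (madj C ** munit i j ** D) =
      (\<Sum>k\<in>UNIV. cnj (C $ i $ k) * A $ i $ k) * (\<Sum>l\<in>UNIV. cnj (B $ j $ l) * D $ j $ l)" for i j
    unfolding hs_entrywise sandwich_munit_nth sum_product
    by (intro sum.cong) (auto simp: mult.commute mult.left_commute)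
  then show ?thesis
    unfolding hsop_def hs_entrywise by (simp add: sum_product)
qed

lemma onb_maps_mem: "onb_maps S I f \<Longrightarrow> a \<in> I \<Longrightarrow> f a \<in> S"
  unfolding onb_maps_def by blast

lemma onb_maps_orthonormal:
  "onb_maps S I f \<Longrightarrow> a \<in> I \<Longrightarrow> b \<in> I \<Longrightarrow> hsop (f a) (f b) = (if a = b then 1 else 0)"
  unfolding onb_maps_def by blast

lemma onb_maps_expansion:
  assumes onb: "onb_maps S I (f :: 'a \<Rightarrow> ('n::finite) cmap)" and I: "finite I" and T: "T \<in> S"
  shows "T = (\<lambda>X. \<Sum>a\<in>I. msc (hsop (f a) T) (f a X))"
proof -
  obtain c where c: "T = (\<lambda>X. \<Sum>a\<in>I. msc (c a) (f a X))"
    using onb T unfolding onb_maps_def by blast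
  have "hsop (f b) T = c b" if b: "b \<in> I" for b
  proof -
    have "hsop (f b) T = (\<Sum>a\<in>I. c a * (if b = a then 1 else 0))"
      unfolding c hsop_lincomb_right using onb_maps_orthonormal[OF onb b] by (auto intro: sum.cong)
    then show ?thesis
      using I b by (simp add: mult_delta_right)
  qed
  then have "(\<lambda>X. \<Sum>a\<in>I. msc (hsop (f a) T) (f a X)) = (\<lambda>X. \<Sum>a\<in>I. msc (c a) (f a X))"
    by (intro ext sum.cong) auto
  with c show ?thesis
    by simp
qed

lemma onb_maps_parseval:
  assumes onb: "onb_maps S I (f :: 'a \<Rightarrow> ('n::finite) cmap)" and I: "finite I"
    and H: "H \<in> S" "K \<in> S"
  shows "(\<Sum>c\<in>I. cnj (hsop (f c) H) * hsop (f c) K) = hsop H K"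
proof -
  have "hsop H K = hsop H (\<lambda>X. \<Sum>c\<in>I. msc (hsop (f c) K) (f c X))"
    using onb_maps_expansion[OF onb I H(2)] by simp
  also have "\<dots> = (\<Sum>c\<in>I. hsop (f c) K * hsop H (f c))"
    by (rule hsop_lincomb_right)
  also have "\<dots> = (\<Sum>c\<in>I. cnj (hsop (f c) H) * hsop (f c) K)"
    by (simp add: cnj_hsop mult.commute)
  finally show ?thesis
    by simp
qed

lemma unitary_on_onb_maps:
  assumes f: "onb_maps S I (f :: 'a \<Rightarrow> ('n::finite) cmap)" and h: "onb_maps S I h"
    and I: "finite I"
  shows "unitary_on I (\<lambda>p q. hsop (f p) (h q))"
  unfolding unitary_on_def
proof (intro conjI ballI)
  fix a b
  assume ab: "a \<in> I" "b \<in> I"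
  show "(\<Sum>c\<in>I. cnj (hsop (f c) (h a)) * hsop (f c) (h b)) = (if a = b then 1 else 0)"
    using onb_maps_parseval[OF f I onb_maps_mem[OF h ab(1)] onb_maps_mem[OF h ab(2)]]
      onb_maps_orthonormal[OF h ab] by simp
  have "(\<Sum>c\<in>I. cnj (hsop (h c) (f a)) * hsop (h c) (f b)) = hsop (f a) (f b)"
    by (rule onb_maps_parseval[OF h I onb_maps_mem[OF f ab(1)] onb_maps_mem[OF f ab(2)]])
  then show "(\<Sum>c\<in>I. hsop (f a) (h c) * cnj (hsop (f b) (h c))) = (if a = b then 1 else 0)"
    using onb_maps_orthonormal[OF f ab] by (simp add: cnj_hsop)
qed

lemma onb_maps_if_orthonormal:
  assumes f: "onb_maps S I (f :: 'a \<Rightarrow> ('n::finite) cmap)" and I: "finite I"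
    and h_mem: "\<forall>b\<in>I. h b \<in> S"
    and h_orth: "\<forall>a\<in>I. \<forall>b\<in>I. hsop (h a) (h b) = (if a = b then 1 else 0)"
  shows "onb_maps S I h"
  unfolding onb_maps_def
proof (intro conjI ballI h_mem[rule_format] h_orth[rule_format])
  fix T
  assume T: "T \<in> S"
  (* The transition matrix U from f to h has orthonormal columns, hence, being square,
     orthonormal rows; so T = sum_a t_a f_a = sum_b c_b h_b with c = t U^dagger. *)
  define U where "U a b = hsop (f a) (h b)" for a b
  have "\<forall>a\<in>I. \<forall>b\<in>I. (\<Sum>c\<in>I. cnj (U c a) * U c b) = (if a = b then 1 else 0)"
    unfolding U_def using onb_maps_parseval[OF f I] h_mem h_orth by simp
  then have rows: "(\<Sum>b\<in>I. U a b * cnj (U a' b)) = (if a = a' then 1 else 0)"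
    if "a \<in> I" "a' \<in> I" for a a'
    using unitary_on_if_orthonormal_columns[OF I] that unfolding unitary_on_def by blast
  define t where "t a = hsop (f a) T" for a
  define c where "c b = (\<Sum>a\<in>I. t a * cnj (U a b))" for b
  have cU: "(\<Sum>b\<in>I. c b * U a b) = t a" if a: "a \<in> I" for a
  proof -
    have "(\<Sum>b\<in>I. c b * U a b) = (\<Sum>a'\<in>I. t a' * (\<Sum>b\<in>I. U a b * cnj (U a' b)))"
      unfolding c_def sum_distrib_right sum_distrib_left
      by (subst sum.swap) (simp add: ac_simps)
    also have "\<dots> = t a"
      using rows[OF a] I a by (simp add: mult_delta_right)
    finally show ?thesis .
  qed
  have "T X = (\<Sum>b\<in>I. msc (c b) (h b X))" for X
  proof -
    have h_exp: "h b X = (\<Sum>a\<in>I. msc (U a b) (f a X))" if "b \<in> I" for b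
      unfolding U_def using onb_maps_expansion[OF f I h_mem[rule_format, OF that]] by metis
    have "(\<Sum>b\<in>I. msc (c b) (h b X)) = (\<Sum>b\<in>I. \<Sum>a\<in>I. msc (c b * U a b) (f a X))"
      by (rule sum.cong) (simp_all add: h_exp msc_sum msc_msc)
    also have "\<dots> = (\<Sum>a\<in>I. msc (t a) (f a X))"
      by (subst sum.swap) (simp add: msc_sum_left[symmetric] cU)
    also have "\<dots> = T X"
      unfolding t_def using onb_maps_expansion[OF f I T] by metis
    finally show ?thesis
      by simp
  qed
  then show "\<exists>c. T = (\<lambda>X. \<Sum>a\<in>I. msc (c a) (h a X))"
    by blast
qed

lemma orthonormal_card_le_spanning_card:
  fixes \<phi> :: "nat \<Rightarrow> ('n::finite) cmap"
  assumes orth: "\<And>s t. s < N \<Longrightarrow> t < N \<Longrightarrow> hsop (\<phi> s) (\<phi> t) = (if s = t then 1 else 0)"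
    and span: "\<And>t. t < N \<Longrightarrow> \<exists>c. \<phi> t = (\<lambda>X. \<Sum>l<k. msc (c l) (g l X))"
  shows "N \<le> k"
proof (rule ccontr)
  assume "\<not> N \<le> k"
  then have kN: "k < N"
    by simp
  obtain C where C: "\<And>t. t < N \<Longrightarrow> \<phi> t = (\<lambda>X. \<Sum>l<k. msc (C t l) (g l X))"
    using span by metis
  obtain w where w0: "\<exists>s<N. w s \<noteq> 0" and wl: "\<forall>l<k. (\<Sum>t<N. C t l * w t) = 0"
    using underdetermined_system_nontrivial_solution[OF kN, of C] by blast
  have Z0: "(\<lambda>X. \<Sum>t<N. msc (w t) (\<phi> t X)) = (\<lambda>X. 0)"
  proof
    fix X
    have "(\<Sum>t<N. msc (w t) (\<phi> t X)) = (\<Sum>t<N. \<Sum>l<k. msc (w t * C t l) (g l X))"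
      by (rule sum.cong) (simp_all add: C msc_sum msc_msc)
    also have "\<dots> = (\<Sum>l<k. msc (\<Sum>t<N. C t l * w t) (g l X))"
      by (subst sum.swap) (simp add: msc_sum_left mult.commute)
    finally show "(\<Sum>t<N. msc (w t) (\<phi> t X)) = 0"
      using wl by simp
  qed
  have "w s = 0" if s: "s < N" for s
  proof -
    have "0 = (\<Sum>t<N. w t * hsop (\<phi> s) (\<phi> t))"
      using arg_cong[OF Z0, of "hsop (\<phi> s)"] by (simp add: hsop_lincomb_right)
    also have "\<dots> = w s"
      using orth[OF s] s by (simp add: mult_delta_right)
    finally show ?thesis
      by simp
  qed
  with w0 show False
    by blast
qed

lemma map_dim_onb_maps:
  assumes f: "onb_maps S I (f :: 'a \<Rightarrow> ('n::finite) cmap)" and I: "finite I"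
  shows "map_dim S = card I"
proof -
  obtain e where e: "bij_betw e {..<card I} I"
    using ex_bij_betw_nat_finite[OF I] by (auto simp: lessThan_atLeast0)
  define N where "N = card I"
  have e_bij: "bij_betw e {..<N} I"
    using e unfolding N_def .
  have e_inj: "e t = e s \<longleftrightarrow> t = s" if "t < N" "s < N" for t s
    using inj_on_eq_iff[OF bij_betw_imp_inj_on[OF e_bij]] that by simp
  have e_mem: "e t \<in> I" if "t < N" for t
    using bij_betw_apply[OF e_bij] that by simp
  define P where "P (k :: nat) \<longleftrightarrow> (\<exists>g. (\<forall>l<k. g l \<in> S) \<and> (\<forall>T\<in>S. \<exists>c. T = (\<lambda>X. \<Sum>l<k. msc (c l) (g l X))))"
    for k
  have "P N"
    unfolding P_def
  proof (intro exI[of _ "\<lambda>l. f (e l)"] conjI allI impI ballI)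
    show "f (e l) \<in> S" if "l < N" for l
      using onb_maps_mem[OF f e_mem[OF that]] .
    fix T
    assume "T \<in> S"
    then obtain c where c: "T = (\<lambda>X. \<Sum>a\<in>I. msc (c a) (f a X))"
      using f unfolding onb_maps_def by blast
    have "T = (\<lambda>X. \<Sum>l<N. msc (c (e l)) (f (e l) X))"
      unfolding c by (intro ext sum.reindex_bij_betw[OF e_bij, symmetric])
    then show "\<exists>c. T = (\<lambda>X. \<Sum>l<N. msc (c l) (f (e l) X))"
      by (intro exI[of _ "\<lambda>l. c (e l)"])
  qed
  moreover have "N \<le> k" if "P k" for k
  proof -
    obtain g where g: "\<forall>T\<in>S. \<exists>c. T = (\<lambda>X. \<Sum>l<k. msc (c l) (g l X))"
      using \<open>P k\<close> unfolding P_def by blast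
    show ?thesis
    proof (rule orthonormal_card_le_spanning_card)
      show "hsop (f (e s)) (f (e t)) = (if s = t then 1 else 0)" if "s < N" "t < N" for s t
        using onb_maps_orthonormal[OF f e_mem[OF that(1)] e_mem[OF that(2)]] e_inj[OF that] by simp
      show "\<exists>c. f (e t) = (\<lambda>X. \<Sum>l<k. msc (c l) (g l X))" if "t < N" for t
        using g onb_maps_mem[OF f e_mem[OF that]] by blast
    qed
  qed
  ultimately have "(LEAST k. P k) = N"
    by (rule Least_equality)
  then show ?thesis
    unfolding map_dim_def P_def N_def .
qed

lemma sum_sesquilinear_unitary_invariant:
  fixes \<Phi> :: "('n::finite) cmat \<Rightarrow> 'n cmat \<Rightarrow> 'n cmat"
  assumes I: "finite I" and U: "unitary_on I U"
    and sesq: "\<And>u v. \<Phi> (\<Sum>j\<in>I. msc (u j) (A j)) (\<Sum>k\<in>I. msc (v k) (B k)) =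
      (\<Sum>j\<in>I. \<Sum>k\<in>I. msc (cnj (u j) * v k) (\<Phi> (A j) (B k)))"
  shows "(\<Sum>i\<in>I. \<Phi> (\<Sum>j\<in>I. msc (U j i) (A j)) (\<Sum>k\<in>I. msc (U k i) (B k))) =
    (\<Sum>j\<in>I. \<Phi> (A j) (B j))"
proof -
  have "(\<Sum>i\<in>I. \<Phi> (\<Sum>j\<in>I. msc (U j i) (A j)) (\<Sum>k\<in>I. msc (U k i) (B k))) =
      (\<Sum>i\<in>I. \<Sum>j\<in>I. \<Sum>k\<in>I. msc (cnj (U j i) * U k i) (\<Phi> (A j) (B k)))"
    by (simp add: sesq)
  also have "\<dots> = (\<Sum>j\<in>I. \<Sum>k\<in>I. msc (\<Sum>i\<in>I. cnj (U j i) * U k i) (\<Phi> (A j) (B k)))"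
    by (subst sum.swap, rule sum.cong[OF refl], subst sum.swap) (simp add: msc_sum_left)
  also have "\<dots> = (\<Sum>j\<in>I. \<Sum>k\<in>I. msc (if j = k then 1 else 0) (\<Phi> (A j) (B k)))"
  proof (intro sum.cong refl)
    fix j k
    assume "j \<in> I" "k \<in> I"
    then have "(\<Sum>i\<in>I. U k i * cnj (U j i)) = (if k = j then 1 else 0)"
      using U unfolding unitary_on_def by blast
    then show "msc (\<Sum>i\<in>I. cnj (U j i) * U k i) (\<Phi> (A j) (B k)) =
        msc (if j = k then 1 else 0) (\<Phi> (A j) (B k))"
      by (simp add: mult.commute eq_commute[of k j])
  qed
  also have "\<dots> = (\<Sum>j\<in>I. \<Phi> (A j) (B j))"
    using I by (simp add: if_distrib[of "\<lambda>c. msc c _"] cong: if_cong)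
  finally show ?thesis .
qed

lemma sesquilinear_hs_msc:
  "msc (hs (\<Sum>j\<in>I. msc (u j) (A j)) X) (\<Sum>k\<in>I. msc (v k) (B k)) =
    (\<Sum>j\<in>I. \<Sum>k\<in>I. msc (cnj (u j) * v k) (msc (hs (A j) X) (B k)))"
  unfolding hs_sum_left msc_sum_left by (simp add: hs_msc_left msc_sum msc_msc ac_simps)

lemma sesquilinear_sandwich:
  "madj (\<Sum>j\<in>I. msc (u j) (A j)) ** X ** (\<Sum>k\<in>I. msc (v k) (B k)) =
    (\<Sum>j\<in>I. \<Sum>k\<in>I. msc (cnj (u j) * v k) (madj (A j) ** X ** (B k :: 'n::finite cmat)))"
proof -
  have "madj (\<Sum>j\<in>I. msc (u j) (A j)) ** X ** (\<Sum>k\<in>I. msc (v k) (B k)) =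
      (\<Sum>k\<in>I. \<Sum>j\<in>I. msc (v k * cnj (u j)) (madj (A j) ** X ** B k))"
    unfolding madj_sum madj_msc
    by (simp add: sum_matrix_mult_left sum_matrix_mult_right msc_mult_left msc_mult_right msc_msc msc_sum)
  also have "\<dots> = (\<Sum>j\<in>I. \<Sum>k\<in>I. msc (cnj (u j) * v k) (madj (A j) ** X ** B k))"
    by (subst sum.swap) (simp add: mult.commute)
  finally show ?thesis .
qed

section \<open>Projector and twirl matrix units\<close>

lemma idx3_eq_Sigma: "idx3 Xi m = Sigma Xi (\<lambda>x. {1..m x} \<times> {1..m x})"
  unfolding idx3_def by auto

lemma finite_idx3: "finite Xi \<Longrightarrow> finite (idx3 Xi m)"
  unfolding idx3_eq_Sigma by simp

lemma card_idx3: "finite Xi \<Longrightarrow> card (idx3 Xi m) = (\<Sum>x\<in>Xi. (m x)\<^sup>2)"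
  unfolding idx3_eq_Sigma by (simp add: card_cartesian_product power2_eq_square)

lemma PiU_clinear: "clinear_map (PiU d E x a b)"
  unfolding clinear_map_def PiU_def
  by (simp add: hs_add_right msc_add_left sum.distrib hs_msc_right msc_sum msc_msc)

lemma TwirlU_clinear: "clinear_map (TwirlU d E x a b)"
  unfolding clinear_map_def TwirlU_def
  by (simp add: matrix_add_ldistrib matrix_add_rdistrib_cmat sum.distrib msc_mult_left
      msc_mult_right msc_sum)

locale isotypic_basis =
  fixes G :: "('g, 'b) monoid_scheme"
    and r :: "'g \<Rightarrow> complex^'n::finite^'n"
    and Xi :: "'x set"
    and m d :: "'x \<Rightarrow> nat"
    and E :: "'x \<Rightarrow> nat \<Rightarrow> nat \<Rightarrow> complex^'n^'n"
    and J :: "('x \<times> nat \<times> nat) set"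
  assumes J_eq: "J = {(x, a, i). x \<in> Xi \<and> a \<in> {1..m x} \<and> i \<in> {1..d x}}"
    and rep: "unitary_rep G r"
    and fin: "finite Xi"
    and pos: "\<forall>x\<in>Xi. 1 \<le> m x \<and> 1 \<le> d x"
    and orth: "\<forall>(x, a, i)\<in>J. \<forall>(y, b, j)\<in>J.
      hs (E x a i) (E y b j) = (if (x, a, i) = (y, b, j) then 1 else 0)"
    and span_all: "mspan J (\<lambda>(x, a, i). E x a i) = UNIV"
    and equiv: "\<forall>x\<in>Xi. \<forall>g\<in>carrier G. \<exists>C :: nat \<Rightarrow> nat \<Rightarrow> complex.
      \<forall>a\<in>{1..m x}. \<forall>i\<in>{1..d x}.
        conj_act r g (E x a i) = (\<Sum>j\<in>{1..d x}. msc (C j i) (E x a j))"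
    and irred: "\<forall>x\<in>Xi. irreducible_sub G r (mspan {1..d x} (E x 1))"
    and noniso: "\<forall>x\<in>Xi. \<forall>y\<in>Xi. x \<noteq> y \<longrightarrow>
      \<not> iso_sub G r (mspan {1..d x} (E x 1)) (mspan {1..d y} (E y 1))"
begin

abbreviation EJ :: "'x \<times> nat \<times> nat \<Rightarrow> 'n cmat" where
  "EJ \<equiv> \<lambda>(x, a, i). E x a i"

abbreviation first_copy :: "'x \<Rightarrow> 'n cmat set" where
  "first_copy x \<equiv> mspan {1..d x} (E x 1)"

lemma mem_J [simp]: "(x, a, i) \<in> J \<longleftrightarrow> x \<in> Xi \<and> a \<in> {1..m x} \<and> i \<in> {1..d x}"
  unfolding J_eq by simp

lemma finite_J: "finite J"
proof -
  have "J = Sigma Xi (\<lambda>x. {1..m x} \<times> {1..d x})"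
    unfolding J_eq by auto
  then show ?thesis
    using fin by simp
qed

lemma one_mem_m: "x \<in> Xi \<Longrightarrow> 1 \<in> {1..m x}"
  using pos by auto

lemma one_mem_d: "x \<in> Xi \<Longrightarrow> 1 \<in> {1..d x}"
  using pos by auto

lemma orthonormal_J: "orthonormal_on J EJ"
  using orth unfolding orthonormal_on_def by fast

lemma hs_E_E:
  assumes "x \<in> Xi" "a \<in> {1..m x}" "i \<in> {1..d x}" "y \<in> Xi" "b \<in> {1..m y}" "j \<in> {1..d y}"
  shows "hs (E x a i) (E y b j) = (if x = y \<and> a = b \<and> i = j then 1 else 0)"
  using orthonormal_J[unfolded orthonormal_on_def, rule_format, of "(x, a, i)" "(y, b, j)"] assms
  by simp

lemma orthonormal_copy: "x \<in> Xi \<Longrightarrow> a \<in> {1..m x} \<Longrightarrow> orthonormal_on {1..d x} (E x a)"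
  unfolding orthonormal_on_def by (simp add: hs_E_E)

lemma E_expansion: "X = (\<Sum>p\<in>J. msc (hs (EJ p) X) (EJ p))"
  by (rule mspan_orthonormal_expansion[OF orthonormal_J finite_J]) (simp add: span_all)

lemma E_coeff_eqI:
  assumes "\<And>x a i. x \<in> Xi \<Longrightarrow> a \<in> {1..m x} \<Longrightarrow> i \<in> {1..d x} \<Longrightarrow> hs (E x a i) X = hs (E x a i) Y"
  shows "X = Y"
  by (rule mspan_orthonormal_eqI[OF orthonormal_J finite_J]) (auto simp: span_all assms)

(* By equiv, this matrix of g on {E_i^1}_i is also its matrix on every other copy {E_i^alpha}_i. *)
definition act_coeff :: "'g \<Rightarrow> 'x \<Rightarrow> nat \<Rightarrow> nat \<Rightarrow> complex" where
  "act_coeff g x j i = hs (E x 1 j) (conj_act r g (E x 1 i))"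

lemma conj_act_E:
  assumes g: "g \<in> carrier G" and x: "x \<in> Xi" and a: "a \<in> {1..m x}" and i: "i \<in> {1..d x}"
  shows "conj_act r g (E x a i) = (\<Sum>j\<in>{1..d x}. msc (act_coeff g x j i) (E x a j))"
proof -
  obtain C where C: "\<forall>a\<in>{1..m x}. \<forall>i\<in>{1..d x}.
      conj_act r g (E x a i) = (\<Sum>j\<in>{1..d x}. msc (C j i) (E x a j))"
    using equiv x g by blast
  have "act_coeff g x j i = C j i" if "j \<in> {1..d x}" for j
    unfolding act_coeff_def using C one_mem_m[OF x] i
      hs_orthonormal_combination[OF orthonormal_copy[OF x one_mem_m[OF x]] _ that] by simp
  then show ?thesis
    using C a i by (auto intro: sum.cong)
qed

lemma act_coeff_unitary:
  assumes g: "g \<in> carrier G" and x: "x \<in> Xi"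
  shows "unitary_on {1..d x} (act_coeff g x)"
proof (rule unitary_on_if_orthonormal_columns, simp, intro ballI)
  fix k j
  assume k: "k \<in> {1..d x}" and j: "j \<in> {1..d x}"
  have "(\<Sum>i\<in>{1..d x}. cnj (act_coeff g x i k) * act_coeff g x i j) =
      hs (conj_act r g (E x 1 k)) (conj_act r g (E x 1 j))"
    unfolding conj_act_E[OF g x one_mem_m[OF x] k] by (simp add: hs_sum_left hs_msc_left act_coeff_def)
  also have "\<dots> = (if k = j then 1 else 0)"
    using hs_conj_act[OF rep g] x k j one_mem_m[OF x] by (simp add: hs_E_E)
  finally show "(\<Sum>i\<in>{1..d x}. cnj (act_coeff g x i k) * act_coeff g x i j) = (if k = j then 1 else 0)" .
qed

lemma sum_sesquilinear_conj_act_E: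
  fixes \<Phi> :: "'n cmat \<Rightarrow> 'n cmat \<Rightarrow> 'n cmat"
  assumes g: "g \<in> carrier G" and x: "x \<in> Xi" and a: "a \<in> {1..m x}" and b: "b \<in> {1..m x}"
    and sesq: "\<And>u v. \<Phi> (\<Sum>j\<in>{1..d x}. msc (u j) (E x a j)) (\<Sum>k\<in>{1..d x}. msc (v k) (E x b k)) =
      (\<Sum>j\<in>{1..d x}. \<Sum>k\<in>{1..d x}. msc (cnj (u j) * v k) (\<Phi> (E x a j) (E x b k)))"
  shows "(\<Sum>i\<in>{1..d x}. \<Phi> (conj_act r g (E x a i)) (conj_act r g (E x b i))) =
    (\<Sum>i\<in>{1..d x}. \<Phi> (E x a i) (E x b i))"
proof -
  have "(\<Sum>i\<in>{1..d x}. \<Phi> (conj_act r g (E x a i)) (conj_act r g (E x b i))) =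
      (\<Sum>i\<in>{1..d x}. \<Phi> (\<Sum>j\<in>{1..d x}. msc (act_coeff g x j i) (E x a j))
        (\<Sum>k\<in>{1..d x}. msc (act_coeff g x k i) (E x b k)))"
    by (rule sum.cong) (simp_all add: conj_act_E[OF g x a] conj_act_E[OF g x b])
  also have "\<dots> = (\<Sum>i\<in>{1..d x}. \<Phi> (E x a i) (E x b i))"
    by (rule sum_sesquilinear_unitary_invariant[OF _ act_coeff_unitary[OF g x] sesq]) simp
  finally show ?thesis .
qed

lemma PiU_equivariant:
  assumes x: "x \<in> Xi" and a: "a \<in> {1..m x}" and b: "b \<in> {1..m x}" and g: "g \<in> carrier G"
  shows "PiU d E x a b (conj_act r g X) = conj_act r g (PiU d E x a b X)"
proof -
  define F where "F c i = conj_act r (inv\<^bsub>G\<^esub> g) (E x c i)" for c i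
  have g': "inv\<^bsub>G\<^esub> g \<in> carrier G"
    using group.inv_closed[OF unitary_rep_group[OF rep] g] .
  have "PiU d E x a b (conj_act r g X) =
      (\<Sum>i\<in>{1..d x}. msc (hs (conj_act r g (F a i)) (conj_act r g X)) (conj_act r g (F b i)))"
    by (simp only: PiU_def F_def conj_act_conj_act_inv[OF rep g])
  also have "\<dots> = conj_act r g (\<Sum>i\<in>{1..d x}. msc (hs (F a i) X) (F b i))"
    by (simp add: hs_conj_act[OF rep g] conj_act_sum conj_act_msc)
  also have "(\<Sum>i\<in>{1..d x}. msc (hs (F a i) X) (F b i)) = PiU d E x a b X"
    unfolding PiU_def F_def by (rule sum_sesquilinear_conj_act_E[OF g' x a b sesquilinear_hs_msc])
  finally show ?thesis .
qed

lemma TwirlU_equivariant: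
  assumes x: "x \<in> Xi" and a: "a \<in> {1..m x}" and b: "b \<in> {1..m x}" and g: "g \<in> carrier G"
  shows "TwirlU d E x a b (conj_act r g X) = conj_act r g (TwirlU d E x a b X)"
proof -
  define F where "F c i = conj_act r (inv\<^bsub>G\<^esub> g) (E x c i)" for c i
  have g': "inv\<^bsub>G\<^esub> g \<in> carrier G"
    using group.inv_closed[OF unitary_rep_group[OF rep] g] .
  have "TwirlU d E x a b (conj_act r g X) =
      (\<Sum>i\<in>{1..d x}. madj (conj_act r g (F a i)) ** conj_act r g X ** conj_act r g (F b i))"
    by (simp only: TwirlU_def F_def conj_act_conj_act_inv[OF rep g])
  also have "\<dots> = conj_act r g (\<Sum>i\<in>{1..d x}. madj (F a i) ** X ** F b i)"
    by (simp add: conj_act_sandwich[OF rep g] conj_act_sum)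
  also have "(\<Sum>i\<in>{1..d x}. madj (F a i) ** X ** F b i) = TwirlU d E x a b X"
    unfolding TwirlU_def F_def by (rule sum_sesquilinear_conj_act_E[OF g' x a b sesquilinear_sandwich])
  finally show ?thesis .
qed

lemma PiU_HomG: "x \<in> Xi \<Longrightarrow> a \<in> {1..m x} \<Longrightarrow> b \<in> {1..m x} \<Longrightarrow> PiU d E x a b \<in> HomG G r"
  unfolding HomG_def using PiU_clinear PiU_equivariant by auto

lemma TwirlU_HomG: "x \<in> Xi \<Longrightarrow> a \<in> {1..m x} \<Longrightarrow> b \<in> {1..m x} \<Longrightarrow> TwirlU d E x a b \<in> HomG G r"
  unfolding HomG_def using TwirlU_clinear TwirlU_equivariant by auto

lemma PiU_E:
  assumes "x \<in> Xi" "a \<in> {1..m x}" "b \<in> {1..m x}" "y \<in> Xi" "c \<in> {1..m y}" "i \<in> {1..d y}"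
  shows "PiU d E x a b (E y c i) = (if y = x \<and> c = a then E x b i else 0)"
proof -
  have "PiU d E x a b (E y c i) = (\<Sum>j\<in>{1..d x}. msc (if y = x \<and> c = a \<and> j = i then 1 else 0) (E x b j))"
    unfolding PiU_def using assms by (intro sum.cong) (auto simp: hs_E_E)
  then show ?thesis
    using assms by (auto simp: if_distrib[of "\<lambda>c. msc c _"] cong: if_cong)
qed

lemma hs_E_PiU:
  assumes "x \<in> Xi" "a \<in> {1..m x}" "b \<in> {1..m x}" "y \<in> Xi" "c \<in> {1..m y}" "k \<in> {1..d y}"
  shows "hs (E y c k) (PiU d E x a b X) = (if y = x \<and> c = b then hs (E x a k) X else 0)"
proof -
  have "hs (E y c k) (PiU d E x a b X) =
      (\<Sum>j\<in>{1..d x}. if y = x \<and> c = b \<and> j = k then hs (E x a j) X else 0)"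
    unfolding PiU_def hs_sum_right hs_msc_right using assms by (intro sum.cong) (auto simp: hs_E_E)
  then show ?thesis
    using assms by (auto cong: if_cong)
qed

lemma PiU_mem_first_copy: "PiU d E y b 1 Z \<in> first_copy y"
  unfolding PiU_def by (rule mspan_combination_mem)

definition schur_coeff :: "'n cmap \<Rightarrow> 'x \<Rightarrow> nat \<Rightarrow> nat \<Rightarrow> complex" where
  "schur_coeff T x a b = hs (E x b 1) (T (E x a 1))"

(* The component E_{x a} -> E_{y b} of T, moved onto the first copies, where Schur's lemma
   applies. *)
definition transport :: "'n cmap \<Rightarrow> 'x \<Rightarrow> nat \<Rightarrow> 'x \<Rightarrow> nat \<Rightarrow> 'n cmap" where
  "transport T x a y b = (\<lambda>X. PiU d E y b 1 (T (PiU d E x 1 a X)))"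

lemma transport_HomG:
  assumes "T \<in> HomG G r" "x \<in> Xi" "a \<in> {1..m x}" "y \<in> Xi" "b \<in> {1..m y}"
  shows "transport T x a y b \<in> HomG G r"
  unfolding transport_def using assms one_mem_m
  by (intro HomG_comp[OF PiU_HomG HomG_comp[OF _ PiU_HomG]]) auto

lemma transport_into: "transport T x a y b ` first_copy x \<subseteq> first_copy y"
  unfolding transport_def using PiU_mem_first_copy by auto

lemma hs_E_transport_E:
  assumes x: "x \<in> Xi" and a: "a \<in> {1..m x}" and i: "i \<in> {1..d x}"
    and y: "y \<in> Xi" and b: "b \<in> {1..m y}" and k: "k \<in> {1..d y}"
  shows "hs (E y 1 k) (transport T x a y b (E x 1 i)) = hs (E y b k) (T (E x a i))"
  unfolding transport_def using PiU_E[OF x one_mem_m[OF x] a x one_mem_m[OF x] i]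
    hs_E_PiU[OF y b one_mem_m[OF y] y one_mem_m[OF y] k] by simp

lemma hs_E_HomG_E:
  assumes T: "T \<in> HomG G r"
    and x: "x \<in> Xi" and a: "a \<in> {1..m x}" and i: "i \<in> {1..d x}"
    and y: "y \<in> Xi" and b: "b \<in> {1..m y}" and k: "k \<in> {1..d y}"
  shows "hs (E y b k) (T (E x a i)) = (if y = x \<and> k = i then schur_coeff T x a b else 0)"
proof -
  let ?S = "transport T x a y b"
  have S: "?S \<in> HomG G r"
    by (rule transport_HomG[OF T x a y b])
  show ?thesis
  proof (cases "y = x")
    case False
    have "\<forall>X\<in>first_copy x. ?S X = 0"
      using HomG_vanishes_on_nonisomorphic[OF irred[rule_format, OF x] irred[rule_format, OF y]
          noniso[rule_format, OF x y not_sym[OF False]] S transport_into] .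
    then show ?thesis
      using hs_E_transport_E[OF x a i y b k, of T, symmetric] mspan_generator_mem[of "{1..d x}" i "E x 1"] i False
      by simp
  next
    case True
    then obtain \<mu> where \<mu>: "\<forall>X\<in>first_copy x. ?S X = msc \<mu> X"
      using HomG_scalar_on_irreducible[OF irred[rule_format, OF x] orthonormal_copy[OF x one_mem_m[OF x]] S]
        transport_into by blast
    have hs_T: "hs (E x b k') (T (E x a i')) = (if k' = i' then \<mu> else 0)"
      if "i' \<in> {1..d x}" "k' \<in> {1..d x}" for i' k'
    proof -
      have "hs (E x b k') (T (E x a i')) = hs (E x 1 k') (msc \<mu> (E x 1 i'))"
        using hs_E_transport_E[OF x a that(1) y b, of k' T, symmetric] that True \<mu>
          mspan_generator_mem[of "{1..d x}" i' "E x 1"] by simp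
      also have "\<dots> = (if k' = i' then \<mu> else 0)"
        using hs_E_E[OF x one_mem_m[OF x] that(2) x one_mem_m[OF x] that(1)] by (simp add: hs_msc_right)
      finally show ?thesis .
    qed
    then have "schur_coeff T x a b = \<mu>"
      unfolding schur_coeff_def using one_mem_d[OF x] by simp
    then show ?thesis
      using hs_T[OF i] k True by simp
  qed
qed

lemma HomG_eq_sum_PiU:
  assumes T: "T \<in> HomG G r"
  shows "T X = (\<Sum>(x, a, b)\<in>idx3 Xi m. msc (schur_coeff T x a b) (PiU d E x a b X))"
proof (rule E_coeff_eqI)
  fix y c k
  assume y: "y \<in> Xi" and c: "c \<in> {1..m y}" and k: "k \<in> {1..d y}"
  define f where "f p = hs (EJ p) X * hs (E y c k) (T (EJ p))" for p
  define f' where "f' q = (case q of (x, a, b) \<Rightarrow> schur_coeff T x a b * hs (E y c k) (PiU d E x a b X))"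
    for q
  have "hs (E y c k) (T X) = (\<Sum>p\<in>J. f p)"
    unfolding f_def
    by (subst E_expansion[of X]) (simp add: clinear_map_lincomb[OF HomG_clinear[OF T]] hs_sum_right hs_msc_right)
  also have "\<dots> = (\<Sum>a\<in>{1..m y}. f (y, a, k))"
  proof (rule sum_vanishing_outside_inj_image[OF finite_J])
    show "(\<lambda>a. (y, a, k)) ` {1..m y} \<subseteq> J" "inj_on (\<lambda>a. (y, a, k)) {1..m y}"
      using y k by (auto simp: inj_on_def)
    fix p
    assume "p \<in> J" "p \<notin> (\<lambda>a. (y, a, k)) ` {1..m y}"
    then show "f p = 0"
      unfolding f_def using hs_E_HomG_E[OF T _ _ _ y c k] by (cases p) auto
  qed
  also have "\<dots> = (\<Sum>a\<in>{1..m y}. f' (y, a, c))"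
    unfolding f_def f'_def using hs_E_HomG_E[OF T y _ k y c k] hs_E_PiU[OF y _ c y c k]
    by (intro sum.cong) auto
  also have "\<dots> = (\<Sum>q\<in>idx3 Xi m. f' q)"
  proof (rule sum_vanishing_outside_inj_image[OF finite_idx3[OF fin], symmetric])
    show "(\<lambda>a. (y, a, c)) ` {1..m y} \<subseteq> idx3 Xi m" "inj_on (\<lambda>a. (y, a, c)) {1..m y}"
      using y c by (auto simp: idx3_def inj_on_def)
    fix q
    assume "q \<in> idx3 Xi m" "q \<notin> (\<lambda>a. (y, a, c)) ` {1..m y}"
    then show "f' q = 0"
      unfolding f'_def using hs_E_PiU[OF _ _ _ y c k] by (cases q) (auto simp: idx3_def)
  qed
  also have "\<dots> = hs (E y c k) (\<Sum>(x, a, b)\<in>idx3 Xi m. msc (schur_coeff T x a b) (PiU d E x a b X))"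
    unfolding f'_def by (simp add: hs_sum_right hs_msc_right case_prod_beta)
  finally show "hs (E y c k) (T X) = \<dots>" .
qed

lemma sum_hs_E_hs_E:
  assumes x: "x \<in> Xi" and a: "a \<in> {1..m x}" and b: "b \<in> {1..m x}"
    and y: "y \<in> Xi" and c: "c \<in> {1..m y}" and e: "e \<in> {1..m y}"
  shows "(\<Sum>i\<in>{1..d x}. \<Sum>j\<in>{1..d y}. hs (E y c j) (E x a i) * hs (E x b i) (E y e j)) =
    (if (x, a, b) = (y, c, e) then of_nat (d x) else 0)"
proof (cases "(x, a, b) = (y, c, e)")
  case True
  then have "hs (E y c j) (E x a i) * hs (E x b i) (E y e j) = (if i = j then 1 else 0)"
    if "i \<in> {1..d x}" "j \<in> {1..d y}" for i j
    using hs_E_E x a b that by auto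
  then show ?thesis
    using True by simp
next
  case False
  have "(\<Sum>i\<in>{1..d x}. \<Sum>j\<in>{1..d y}. hs (E y c j) (E x a i) * hs (E x b i) (E y e j)) = 0"
  proof (intro sum.neutral ballI)
    fix i j
    assume "i \<in> {1..d x}" "j \<in> {1..d y}"
    then show "hs (E y c j) (E x a i) * hs (E x b i) (E y e j) = 0"
      using hs_E_E[OF y c _ x a] hs_E_E[OF x b _ y e] False by auto
  qed
  then show ?thesis
    unfolding if_not_P[OF False] .
qed

lemma hsop_PiU:
  assumes "x \<in> Xi" "a \<in> {1..m x}" "b \<in> {1..m x}" "y \<in> Xi" "c \<in> {1..m y}" "e \<in> {1..m y}"
  shows "hsop (PiU d E x a b) (PiU d E y c e) = (if (x, a, b) = (y, c, e) then of_nat (d x) else 0)"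
  unfolding PiU_def[abs_def] hsop_sum_left hsop_sum_right hsop_rank_one
  by (rule sum_hs_E_hs_E[OF assms])

lemma hsop_TwirlU:
  assumes "x \<in> Xi" "a \<in> {1..m x}" "b \<in> {1..m x}" "y \<in> Xi" "c \<in> {1..m y}" "e \<in> {1..m y}"
  shows "hsop (TwirlU d E x a b) (TwirlU d E y c e) = (if (x, a, b) = (y, c, e) then of_nat (d x) else 0)"
  unfolding TwirlU_def[abs_def] hsop_sum_left hsop_sum_right hsop_sandwich
  by (rule sum_hs_E_hs_E[OF assms])

lemma hsop_normalized:
  assumes p: "p \<in> idx3 Xi m" and q: "q \<in> idx3 Xi m"
    and F: "\<And>x a b. F (x, a, b) = (\<lambda>X. msc (complex_of_real (1 / sqrt (real (d x)))) (K x a b X))"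
    and K: "\<And>x a b y c e. (x, a, b) \<in> idx3 Xi m \<Longrightarrow> (y, c, e) \<in> idx3 Xi m \<Longrightarrow>
      hsop (K x a b) (K y c e) = (if (x, a, b) = (y, c, e) then of_nat (d x) else 0)"
  shows "hsop (F p) (F q) = (if p = q then 1 else 0)"
proof -
  obtain x a b y c e where pq: "p = (x, a, b)" "q = (y, c, e)"
    by (cases p, cases q)
  have "0 < d x"
    using pos p pq by (auto simp: idx3_def)
  then have "1 / sqrt (real (d x)) * (1 / sqrt (real (d x))) * real (d x) = 1"
    by simp
  then have "cnj (complex_of_real (1 / sqrt (real (d x)))) * complex_of_real (1 / sqrt (real (d x)))
      * of_nat (d x) = 1"
    by (metis complex_cnj_complex_of_real of_real_1 of_real_mult of_real_of_nat_eq)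
  then show ?thesis
    using K[of x a b y c e] p q unfolding pq F hsop_msc_left hsop_msc_right by auto
qed

lemma nPi_HomG: "q \<in> idx3 Xi m \<Longrightarrow> nPi d E q \<in> HomG G r"
  by (cases q) (auto simp: nPi_def idx3_def intro!: HomG_msc[OF PiU_HomG])

lemma nTwirl_HomG: "q \<in> idx3 Xi m \<Longrightarrow> nTwirl d E q \<in> HomG G r"
  by (cases q) (auto simp: nTwirl_def idx3_def intro!: HomG_msc[OF TwirlU_HomG])

lemma onb_nPi: "onb_maps (HomG G r) (idx3 Xi m) (nPi d E)"
  unfolding onb_maps_def
proof (intro conjI ballI nPi_HomG)
  show "hsop (nPi d E p) (nPi d E q) = (if p = q then 1 else 0)"
    if "p \<in> idx3 Xi m" "q \<in> idx3 Xi m" for p q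
    by (rule hsop_normalized[OF that, where K = "PiU d E"]) (auto simp: nPi_def idx3_def hsop_PiU)
  fix T
  assume T: "T \<in> HomG G r"
  define c where "c = (\<lambda>(x, a, b). schur_coeff T x a b * complex_of_real (sqrt (real (d x))))"
  have "T X = (\<Sum>q\<in>idx3 Xi m. msc (c q) (nPi d E q X))" for X
  proof -
    have cancel: "msc (k * complex_of_real (sqrt (real (d x))))
        (msc (complex_of_real (1 / sqrt (real (d x)))) Y) = msc k Y" if "x \<in> Xi" for x k Y
    proof -
      have "0 < d x"
        using pos that by auto
      then show ?thesis
        by (simp add: msc_msc flip: of_real_mult)
    qed
    show ?thesis
      unfolding HomG_eq_sum_PiU[OF T, of X]
      by (intro sum.cong) (auto simp: c_def nPi_def idx3_def cancel simp del: of_real_divide)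
  qed
  then show "\<exists>c. T = (\<lambda>X. \<Sum>q\<in>idx3 Xi m. msc (c q) (nPi d E q X))"
    by blast
qed

lemma onb_nTwirl: "onb_maps (HomG G r) (idx3 Xi m) (nTwirl d E)"
proof (rule onb_maps_if_orthonormal[OF onb_nPi finite_idx3[OF fin]])
  show "\<forall>q\<in>idx3 Xi m. nTwirl d E q \<in> HomG G r"
    using nTwirl_HomG by blast
  show "\<forall>p\<in>idx3 Xi m. \<forall>q\<in>idx3 Xi m. hsop (nTwirl d E p) (nTwirl d E q) = (if p = q then 1 else 0)"
    by (intro ballI hsop_normalized[where K = "TwirlU d E"]) (auto simp: nTwirl_def idx3_def hsop_TwirlU)
qed

end

theorem mainTheorem15:
  fixes G :: "('g, 'b) monoid_scheme"
    and r :: "'g \<Rightarrow> complex^'n::finite^'n"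
    and Xi :: "'x set"
    and m d :: "'x \<Rightarrow> nat"
    and E :: "'x \<Rightarrow> nat \<Rightarrow> nat \<Rightarrow> complex^'n^'n"
  defines "J \<equiv> {(x, a, i). x \<in> Xi \<and> a \<in> {1..m x} \<and> i \<in> {1..d x}}"
  assumes rep: "unitary_rep G r"
    and fin: "finite Xi"
    and pos: "\<forall>x\<in>Xi. 1 \<le> m x \<and> 1 \<le> d x"
    and orth: "\<forall>(x, a, i)\<in>J. \<forall>(y, b, j)\<in>J.
                 hs (E x a i) (E y b j) = (if (x, a, i) = (y, b, j) then 1 else 0)"
    and span_all: "mspan J (\<lambda>(x, a, i). E x a i) = UNIV"
    and equiv: "\<forall>x\<in>Xi. \<forall>g\<in>carrier G. \<exists>C :: nat \<Rightarrow> nat \<Rightarrow> complex.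
                 \<forall>a\<in>{1..m x}. \<forall>i\<in>{1..d x}.
                   conj_act r g (E x a i) = (\<Sum>j\<in>{1..d x}. msc (C j i) (E x a j))"
    and irred: "\<forall>x\<in>Xi. irreducible_sub G r (mspan {1..d x} (E x 1))"
    and noniso: "\<forall>x\<in>Xi. \<forall>y\<in>Xi. x \<noteq> y \<longrightarrow>
                 \<not> iso_sub G r (mspan {1..d x} (E x 1)) (mspan {1..d y} (E y 1))"
  shows "onb_maps (HomG G r) (idx3 Xi m) (nPi d E)
       \<and> onb_maps (HomG G r) (idx3 Xi m) (nTwirl d E)
       \<and> map_dim (HomG G r) = (\<Sum>x\<in>Xi. (m x)\<^sup>2)
       \<and> unitary_on (idx3 Xi m) (\<lambda>p q. hsop (nPi d E p) (nTwirl d E q))"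
proof -
  interpret isotypic_basis G r Xi m d E J
    using rep fin pos orth span_all equiv irred noniso unfolding J_def by unfold_locales simp_all
  show ?thesis
    using onb_nPi onb_nTwirl map_dim_onb_maps[OF onb_nPi finite_idx3[OF fin]] card_idx3[OF fin]
      unitary_on_onb_maps[OF onb_nPi onb_nTwirl finite_idx3[OF fin]] by simp
qed

end
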